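(* Let $\mathcal{M}$ be a non-degenerate exactly solvable operator of order $M\ge2$ and let $U\subset\Omega$ be a simply connected open set. Then every WKB formal solution of $\mathcal{M}v=\eta^Mv$ is pre-Borel-summable in $U$.
   Context: $\mathcal{M}=\sum_{k=1}^{M}\rho_k(z)\frac{d^k}{dz^k}$ with complex polynomials $\rho_k$, $\deg\rho_k\le k$, $\rho_M$ monic of degree $M$; $\Omega=\mathbb{C}\setminus\operatorname{supp}\mu^{\mathcal{M}}$, $\mu^{\mathcal{M}}$ being the weak limit of the root-counting measures of the monic eigenpolynomials of $\mathcal{M}$. $w_1$ is the branch of $\rho_M^{-1/M}$ on $\Omega$ with $w_1\sim1/z$ at $\infty$, $w_j=e^{2\pi i(j-1)/M}w_1$. A WKB formal solution (large parameter $\eta>0$) is a formal solution $\eta^{-1/2}\exp(\int_{z^*}^zS(\zeta,\eta)d\zeta)=\exp(\eta\int_{z^*}^zS_0)\sum_{n\ge0}f_n(z)\eta^{-(n+1/2)}$ with $S=\sum_{k\ge0}S_k\eta^{1-k}$, $S_0=w_j$ for some $j$, and $S_k$ holomorphic, determined recursively. A formal series $\exp(\eta\zeta(z))\sum_{n\ge0}f_n(z)\eta^{-(n+1/2)}$ with $\zeta,f_n$ holomorphic in $U$ is pre-Borel-summable in $U$ if for each compact $K\subset U$ there are constants $A_K,C_K$ with $\sup_K|f_n|<A_KC_K^n\Gamma(1+n)$ for all $n$. *)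

theory Defs
  imports "HOL-Analysis.Analysis" "HOL-Computational_Algebra.Polynomial"
    "HOL-Computational_Algebra.Formal_Power_Series"
begin

definition op_poly :: "(nat \<Rightarrow> complex poly) \<Rightarrow> nat \<Rightarrow> complex poly \<Rightarrow> complex poly" where
  "op_poly \<rho> Mo p = (\<Sum>k=1..Mo. \<rho> k * (pderiv ^^ k) p)"

definition nondeg_exactly_solvable :: "(nat \<Rightarrow> complex poly) \<Rightarrow> nat \<Rightarrow> bool" where
  "nondeg_exactly_solvable \<rho> Mo \<longleftrightarrow>
     (\<forall>k\<in>{1..Mo}. degree (\<rho> k) \<le> k) \<and> degree (\<rho> Mo) = Mo \<and> lead_coeff (\<rho> Mo) = 1"

definition monic_eigenpoly :: "(nat \<Rightarrow> complex poly) \<Rightarrow> nat \<Rightarrow> nat \<Rightarrow> complex poly \<Rightarrow> bool" where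
  "monic_eigenpoly \<rho> Mo n p \<longleftrightarrow> degree p = n \<and> lead_coeff p = 1 \<and>
     (\<exists>c::complex. op_poly \<rho> Mo p = smult c p)"

definition root_count_integral :: "complex poly \<Rightarrow> (complex \<Rightarrow> real) \<Rightarrow> real" where
  "root_count_integral p f =
     (\<Sum>x\<in>{x. poly p x = 0}. real (order x p) * f x) / real (degree p)"

definition is_root_limit_measure :: "(nat \<Rightarrow> complex poly) \<Rightarrow> nat \<Rightarrow> complex measure \<Rightarrow> bool" where
  "is_root_limit_measure \<rho> Mo \<mu> \<longleftrightarrow> finite_measure \<mu> \<and> sets \<mu> = sets borel \<and>
     (\<forall>p :: nat \<Rightarrow> complex poly. (\<forall>\<^sub>F n in sequentially. monic_eigenpoly \<rho> Mo n (p n)) \<longrightarrow>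
        (\<forall>f :: complex \<Rightarrow> real. continuous_on UNIV f \<and> bounded (range f) \<longrightarrow>
           (\<lambda>n. root_count_integral (p n) f) \<longlonglongrightarrow> integral\<^sup>L \<mu> f))"

definition msupp :: "complex measure \<Rightarrow> complex set" where
  "msupp \<mu> = {z. \<forall>e>0. emeasure \<mu> (ball z e) > 0}"

text \<open>Coefficients Y k n of Y_k = eps^k P_k(S), where P_0 = 1, P_{k+1} = S P_k + d/dz P_k,
  S = sum_i S_i eta^(1-i), eps = 1/eta; Y_0 = 1, Y_{k+1} = T Y_k + eps d/dz Y_k, T = sum_i S_i eps^i.\<close>
primrec wkb_Y :: "(nat \<Rightarrow> complex \<Rightarrow> complex) \<Rightarrow> nat \<Rightarrow> nat \<Rightarrow> complex \<Rightarrow> complex" where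
  "wkb_Y S 0 n z = (if n = 0 then 1 else 0)"
| "wkb_Y S (Suc k) n z =
     (\<Sum>i\<le>n. S i z * wkb_Y S k (n - i) z) +
     (if n = 0 then 0 else deriv (wkb_Y S k (n - 1)) z)"

text \<open>S solves the Riccati-type equation sum_{k=1}^{Mo} rho_k P_k(S) = eta^Mo formally on U,
  i.e. sum_k rho_k eps^(Mo-k) Y_k = 1 as power series in eps.\<close>
definition wkb_eq :: "(nat \<Rightarrow> complex poly) \<Rightarrow> nat \<Rightarrow> complex set \<Rightarrow> (nat \<Rightarrow> complex \<Rightarrow> complex) \<Rightarrow> bool" where
  "wkb_eq \<rho> Mo U S \<longleftrightarrow> (\<forall>z\<in>U. \<forall>n.
     (\<Sum>k\<in>{k\<in>{1..Mo}. Mo - k \<le> n}. poly (\<rho> k) z * wkb_Y S k (n - (Mo - k)) z)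
       = (if n = 0 then 1 else 0))"

text \<open>Coefficients f_n with eta^(-1/2) exp(int S) = exp(eta G_0) sum_n f_n eta^(-(n+1/2)),
  G_k the primitive of S_k vanishing at the base point.\<close>
definition wkb_f :: "(nat \<Rightarrow> complex \<Rightarrow> complex) \<Rightarrow> nat \<Rightarrow> complex \<Rightarrow> complex" where
  "wkb_f G n z = exp (G 1 z) *
     fps_nth (fps_compose (fps_exp 1) (Abs_fps (\<lambda>m. if m = 0 then 0 else G (m + 1) z))) n"

text \<open>Pre-Borel-summability of exp(eta zeta) sum f_n eta^(-(n+1/2)) in U.\<close>
definition pre_borel_summable :: "complex set \<Rightarrow> (complex \<Rightarrow> complex) \<Rightarrow> (nat \<Rightarrow> complex \<Rightarrow> complex) \<Rightarrow> bool" where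
  "pre_borel_summable U \<zeta> f \<longleftrightarrow> \<zeta> holomorphic_on U \<and> (\<forall>n. f n holomorphic_on U) \<and>
     (\<forall>K. compact K \<and> K \<subseteq> U \<longrightarrow>
        (\<exists>A C::real. \<forall>n. \<forall>z\<in>K. norm (f n z) < A * C ^ n * fact n))"

end

theory Submission
  imports Defs "HOL-Complex_Analysis.Complex_Analysis"
begin

text \<open>Expanding \<open>S = \<Sum> S\<^sub>n \<epsilon>^n\<close> with \<open>\<epsilon> = 1/\<eta>\<close>, only the top order term \<open>\<rho>\<^sub>M Y\<^sub>M\<close> of the
  coefficient of \<open>\<epsilon>^n\<close> in the Riccati equation involves \<open>S\<^sub>n\<close>, and since \<open>\<rho>\<^sub>M S\<^sub>0^M = 1\<close>
  this expresses \<open>S\<^sub>n\<close> through the \<open>S\<^sub>i\<close> with \<open>i < n\<close> and their derivatives. On a disc of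
  radius \<open>R\<close>, with \<open>d(z) = R - |z - z\<^sub>0|\<close>, Nagumo's form of the Cauchy inequality turns
  \<open>|f| d^p \<le> b\<close> into \<open>|f'| d^(p+1) \<le> 6 (p+1) b\<close>; an induction on \<open>n\<close> then gives
  \<open>|S\<^sub>n| d^n \<le> \<gamma> K^n n!\<close> once \<open>\<gamma>\<close> is small and \<open>K\<close> large. So \<open>S\<close> is Gevrey-1 near every
  point; the primitives \<open>G\<^sub>k\<close>, normalised at the base point, inherit this along chains of
  discs in the connected set \<open>U\<close>, compactness makes the bound uniform, and the exponential of a
  Gevrey-1 series is Gevrey-1, which bounds the coefficients \<open>f\<^sub>n\<close>.\<close>

section \<open>Factorial estimates and the exponential of a Gevrey series\<close>

lemma fact_mult_fact_le_fact:
  assumes "i \<le> n"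
  shows "fact i * fact (n - i) \<le> (fact n :: real)"
proof -
  have "fact i * fact (n - i) dvd (fact n :: nat)"
    using assms fact_fact_dvd_fact[of i "n - i"] by simp
  then have "fact i * fact (n - i) \<le> (fact n :: nat)"
    by (intro dvd_imp_le) auto
  then show ?thesis
    by (metis of_nat_fact of_nat_le_iff of_nat_mult)
qed

lemma fact_mult_fact_le_fact_pred:
  assumes a: "1 \<le> a" and b: "1 \<le> b"
  shows "fact a * fact b \<le> (fact (a + b - 1) :: real)"
  using b
proof (induction b rule: nat_induct_at_least)
  case base
  then show ?case using a by simp
next
  case (Suc b)
  have "fact a * fact (Suc b) = real (Suc b) * (fact a * fact b)"
    by (simp add: algebra_simps)
  also have "\<dots> \<le> real (a + b) * fact (a + b - 1)"
    using Suc a by (intro mult_mono) auto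
  also have "\<dots> = fact (a + Suc b - 1)"
    using Suc a by (simp add: fact_reduce[of "a + b"])
  finally show ?case .
qed

lemma sum_fact_mult_fact_le_fact:
  assumes "1 \<le> m"
  shows "(\<Sum>i\<in>{1..<m}. fact i * fact (m - i)) \<le> (fact m :: real)"
proof -
  have "(\<Sum>i\<in>{1..<m}. fact i * fact (m - i)) \<le> (\<Sum>i\<in>{1..<m}. (fact (m - 1) :: real))"
  proof (rule sum_mono)
    fix i assume "i \<in> {1..<m}"
    then show "fact i * fact (m - i) \<le> (fact (m - 1) :: real)"
      using fact_mult_fact_le_fact_pred[of i "m - i"] by auto
  qed
  also have "\<dots> \<le> real m * fact (m - 1)"
    by (simp add: mult_right_mono)
  also have "\<dots> = fact m"
    using assms by (simp add: fact_reduce[of m])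
  finally show ?thesis .
qed

lemma gevrey_convolution_le:
  fixes a b :: "nat \<Rightarrow> real"
  assumes a: "\<And>i. i \<in> {1..<m} \<Longrightarrow> 0 \<le> a i \<and> a i \<le> \<alpha> * (K^i * fact i)"
    and b: "\<And>i. i \<in> {1..<m} \<Longrightarrow> 0 \<le> b i \<and> b i \<le> \<beta> * (K^i * fact i)"
    and "0 \<le> \<alpha>" "0 \<le> \<beta>" "0 \<le> K"
  shows "(\<Sum>i\<in>{1..<m}. a i * b (m - i)) \<le> \<alpha> * \<beta> * (K^m * fact m)"
proof (cases "m = 0")
  case False
  have "(\<Sum>i\<in>{1..<m}. a i * b (m - i))
      \<le> (\<Sum>i\<in>{1..<m}. (\<alpha> * (K^i * fact i)) * (\<beta> * (K^(m - i) * fact (m - i))))"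
    using a b assms(3-5) by (intro sum_mono mult_mono) auto
  also have "\<dots> = \<alpha> * \<beta> * K^m * (\<Sum>i\<in>{1..<m}. fact i * fact (m - i))"
    unfolding sum_distrib_left
    by (intro sum.cong refl) (simp add: mult_ac flip: power_add)
  also have "\<dots> \<le> \<alpha> * \<beta> * (K^m * fact m)"
    using False assms(3-5) sum_fact_mult_fact_le_fact[of m]
    by (simp add: mult_left_mono mult.assoc)
  finally show ?thesis .
qed (use assms in simp)

lemma power_mult_fact_le_divide:
  fixes K :: real
  assumes "m < n" "1 \<le> K"
  shows "K^m * fact m \<le> K^n * fact n / K"
proof -
  have "K^m * fact m \<le> K^(n - 1) * fact (n - 1)"
    using assms by (intro mult_mono power_increasing fact_mono) auto
  also have "\<dots> \<le> K^(n - 1) * fact n"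
    using assms by (intro mult_left_mono fact_mono) auto
  also have "\<dots> = K^n * fact n / K"
    using assms by (cases n) auto
  finally show ?thesis .
qed

lemma fact_Suc_le_two_power_mult_fact: "fact (Suc m) \<le> (2::real)^m * fact m"
proof -
  have "real (Suc m) \<le> 2^m"
    by (induction m) auto
  then show ?thesis
    by (simp add: mult_right_mono)
qed

lemma fps_nth_Suc_exp_compose:
  fixes g :: "'a::field_char_0 fps"
  assumes "g$0 = 0"
  shows "of_nat (Suc n) * (fps_exp 1 oo g)$Suc n =
     (\<Sum>i=0..n. (fps_exp 1 oo g)$i * (of_nat (n - i + 1) * g$(n - i + 1)))"
proof -
  have "fps_deriv (fps_exp 1 oo g) = (fps_exp 1 oo g) * fps_deriv g"
    using fps_compose_deriv[OF assms, of "fps_exp 1"] by simp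
  then have "fps_deriv (fps_exp 1 oo g) $ n = ((fps_exp 1 oo g) * fps_deriv g) $ n"
    by simp
  then show ?thesis
    by (simp add: fps_mult_nth)
qed

text \<open>The constant \<open>C (A + 1)\<close> closes the induction on the recursion of
  \<open>fps_nth_Suc_exp_compose\<close> because \<open>A (\<Sum>i<n. (A + 1)^i) = (A + 1)^n - 1\<close>.\<close>
lemma norm_fps_exp_compose_nth_le:
  fixes g :: "complex fps" and A C :: real
  assumes g0: "g$0 = 0" and A: "0 \<le> A" and C: "1 \<le> C"
    and g: "\<And>m. norm (g$m) \<le> A * C^m * fact m"
  shows "norm ((fps_exp 1 oo g)$n) \<le> (C * (A + 1))^n * fact n"
proof (induction n rule: less_induct)
  case (less n)
  define h where "h = fps_exp 1 oo g"
  show ?case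
  proof (cases n)
    case 0
    then show ?thesis using g0 by (simp add: fps_compose_nth)
  next
    case (Suc m)
    have IH: "norm (h$i) \<le> (C * (A + 1))^i * fact i" if "i \<le> m" for i
      using less Suc h_def that by auto
    have summand: "norm (h$i * (of_nat (m - i + 1) * g$(m - i + 1)))
        \<le> real (Suc m) * fact (Suc m) * (A * C^Suc m * (A + 1)^i)" if i: "i \<le> m" for i
    proof -
      have "norm (h$i * (of_nat (m - i + 1) * g$(m - i + 1)))
          \<le> ((C * (A + 1))^i * fact i) * (real (m - i + 1) * (A * C^(m - i + 1) * fact (m - i + 1)))"
        unfolding norm_mult norm_of_nat using i A C by (intro mult_mono IH g) auto
      also have "\<dots> = real (m - i + 1) * (fact i * fact (Suc m - i)) * (A * C^Suc m * (A + 1)^i)"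
        using i by (simp add: power_mult_distrib Suc_diff_le mult_ac flip: power_add)
      also have "\<dots> \<le> real (Suc m) * fact (Suc m) * (A * C^Suc m * (A + 1)^i)"
        using i A C by (intro mult_right_mono mult_mono fact_mult_fact_le_fact) auto
      finally show ?thesis .
    qed
    have "real (Suc m) * norm (h$Suc m) = norm (\<Sum>i=0..m. h$i * (of_nat (m - i + 1) * g$(m - i + 1)))"
      using fps_nth_Suc_exp_compose[OF g0, of m] h_def by (metis norm_mult norm_of_nat)
    also have "\<dots> \<le> (\<Sum>i=0..m. real (Suc m) * fact (Suc m) * (A * C^Suc m * (A + 1)^i))"
      using summand by (intro order_trans[OF norm_sum] sum_mono) auto
    also have "\<dots> = real (Suc m) * fact (Suc m) * C^Suc m * (A * (\<Sum>i<Suc m. (A + 1)^i))"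
      by (simp only: lessThan_Suc_atMost atLeast0AtMost sum_distrib_left mult_ac)
    also have "\<dots> = real (Suc m) * fact (Suc m) * (C^Suc m * ((A + 1)^Suc m - 1))"
      using power_diff_1_eq[of "A + 1" "Suc m"] by simp
    also have "\<dots> \<le> real (Suc m) * (fact (Suc m) * (C * (A + 1))^Suc m)"
      using C by (simp add: power_mult_distrib right_diff_distrib)
    finally show ?thesis
      using Suc h_def by (simp add: mult_ac del: of_nat_Suc)
  qed
qed

lemma holomorphic_on_fps_exp_compose_nth:
  assumes U: "open U" and g: "\<And>m. g m holomorphic_on U"
  shows "(\<lambda>z. (fps_exp 1 oo Abs_fps (\<lambda>m. if m = 0 then 0 else g m z)) $ n) holomorphic_on U"
proof (induction n rule: less_induct)
  case (less n)
  define h where "h z = fps_exp 1 oo Abs_fps (\<lambda>m. if m = 0 then 0 else g m z)" for z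
  show ?case
  proof (cases n)
    case 0
    then show ?thesis by (simp add: fps_compose_nth)
  next
    case (Suc m)
    have "h z $ Suc m = (\<Sum>i=0..m. h z $ i * (of_nat (m - i + 1) * g (m - i + 1) z)) / of_nat (Suc m)" for z
      using fps_nth_Suc_exp_compose[of "Abs_fps (\<lambda>m. if m = 0 then 0 else g m z)" m]
      by (simp add: h_def field_simps del: of_nat_Suc)
    moreover have "(\<lambda>z. (\<Sum>i=0..m. h z $ i * (of_nat (m - i + 1) * g (m - i + 1) z)) / of_nat (Suc m))
        holomorphic_on U"
      using less Suc unfolding h_def by (intro holomorphic_intros g) auto
    ultimately show ?thesis
      using Suc by (simp add: h_def)
  qed
qed

section \<open>Nagumo's estimate\<close>

lemma one_plus_inverse_Suc_power_le_3: "(1 + 1 / real (Suc p))^p \<le> 3"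
proof -
  have "(1 + 1 / real (Suc p))^p \<le> exp (1 / real (Suc p))^p"
    by (intro power_mono) auto
  also have "\<dots> = exp (real p / real (Suc p))"
    by (simp flip: exp_of_nat_mult)
  also have "\<dots> \<le> exp 1"
    by simp
  also have "\<dots> \<le> 3"
    by (rule exp_le)
  finally show ?thesis .
qed

text \<open>Cauchy's inequality on the disc of radius \<open>d(z)/(p+2)\<close> around \<open>z\<close>, where
  \<open>d(z) = R - |z - z0|\<close> is the distance to the boundary.\<close>
lemma norm_deriv_weighted_le:
  fixes \<phi> :: "complex \<Rightarrow> complex"
  assumes hol: "\<phi> holomorphic_on ball z0 R"
    and bound: "\<And>w. w \<in> ball z0 R \<Longrightarrow> norm (\<phi> w) * (R - dist z0 w)^p \<le> b"
    and z: "z \<in> ball z0 R"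
  shows "norm (deriv \<phi> z) * (R - dist z0 z)^Suc p \<le> 6 * real (Suc p) * b"
proof -
  define d where "d = R - dist z0 z"
  define r where "r = d / real (p + 2)"
  define B where "B = b * (1 + 1 / real (Suc p))^p / d^p"
  have d: "0 < d" using z d_def by simp
  then have b: "0 \<le> b"
    using bound[OF z] d_def by (smt (verit) mult_nonneg_nonneg norm_ge_zero zero_le_power)
  have r: "0 < r" "r < d"
    using d by (simp_all add: r_def divide_less_eq)
  have disc: "cball z r \<subseteq> ball z0 R"
  proof
    fix w assume "w \<in> cball z r"
    then show "w \<in> ball z0 R"
      using r d_def dist_triangle[of z0 w z] by simp
  qed
  have circle: "norm (\<phi> w) \<le> B" if w: "norm (z - w) = r" for w
  proof -
    have "w \<in> ball z0 R" using w disc by (auto simp: dist_norm)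
    moreover have "d - r \<le> R - dist z0 w"
      using dist_triangle[of z0 w z] w d_def by (simp add: dist_norm)
    ultimately have "norm (\<phi> w) * (d - r)^p \<le> b"
      using r bound by (smt (verit) mult_left_mono norm_ge_zero power_mono)
    then have "norm (\<phi> w) \<le> b / (d - r)^p"
      using r by (simp add: field_simps)
    also have "\<dots> = B"
    proof -
      have "d - r = d * real (Suc p) / real (p + 2)"
        using r_def by (simp add: field_simps)
      moreover have "1 + 1 / real (Suc p) = real (p + 2) / real (Suc p)"
        by (simp add: field_simps)
      ultimately show ?thesis
        unfolding B_def using d by (simp add: power_divide power_mult_distrib)
    qed
    finally show ?thesis .
  qed
  have "norm ((deriv ^^ 1) \<phi> z) \<le> fact 1 * B / r^1"
    by (rule Cauchy_inequality[OF holomorphic_on_subset[OF hol] _ r(1) circle])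
       (use disc in \<open>auto intro!: holomorphic_on_imp_continuous_on holomorphic_on_subset[OF hol]\<close>)
  then have "norm (deriv \<phi> z) * d^Suc p \<le> B / r * d^Suc p"
    using d by (intro mult_right_mono) auto
  also have "\<dots> = b * (1 + 1 / real (Suc p))^p * real (p + 2)"
    unfolding B_def r_def using d by (simp add: field_simps)
  also have "\<dots> \<le> b * 3 * real (2 * Suc p)"
    using b one_plus_inverse_Suc_power_le_3[of p] by (intro mult_mono mult_left_mono) auto
  finally show ?thesis
    unfolding d_def by (simp add: algebra_simps)
qed

section \<open>The recursion for the coefficients of \<open>Y\<^sub>k\<close>\<close>

lemma wkb_Y_cong: "(\<And>i. i \<le> m \<Longrightarrow> S i = S' i) \<Longrightarrow> wkb_Y S k m = wkb_Y S' k m"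
proof (induction k arbitrary: m)
  case (Suc k)
  have IH: "wkb_Y S k (m - i) = wkb_Y S' k (m - i)" for i
    using Suc by auto
  show ?case
    using Suc.prems by (auto simp: IH intro!: ext sum.cong)
qed (simp add: fun_eq_iff)

lemma wkb_Y_0 [simp]: "wkb_Y S k 0 = (\<lambda>z. S 0 z ^ k)"
  by (induction k) (auto simp: fun_eq_iff)

lemma wkb_Y_Suc_split:
  assumes "1 \<le> m"
  shows "wkb_Y S (Suc k) m z = S 0 z * wkb_Y S k m z + S m z * S 0 z ^ k
     + (\<Sum>i\<in>{1..<m}. S i z * wkb_Y S k (m - i) z) + deriv (wkb_Y S k (m - 1)) z"
proof -
  have "{..m} = insert 0 (insert m {1..<m})" using assms by auto
  then show ?thesis using assms by (simp add: add.assoc)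
qed

lemma wkb_Y_linear_in_top:
  assumes n: "1 \<le> n"
  shows "wkb_Y S k n z = wkb_Y (S(n := (\<lambda>_. 0))) k n z + of_nat k * S 0 z ^ (k - 1) * S n z"
proof (induction k)
  case (Suc k)
  define S' where "S' = S(n := (\<lambda>_. 0))"
  have lower: "wkb_Y S k m = wkb_Y S' k m" if "m < n" for m
    using that by (intro wkb_Y_cong) (auto simp: S'_def)
  have S': "S' 0 = S 0" "S' n = (\<lambda>_. 0)"
    using n by (auto simp: S'_def)
  have middle: "(\<Sum>i\<in>{1..<n}. S i z * wkb_Y S k (n - i) z) = (\<Sum>i\<in>{1..<n}. S' i z * wkb_Y S' k (n - i) z)"
  proof (rule sum.cong)
    fix i assume "i \<in> {1..<n}"
    then show "S i z * wkb_Y S k (n - i) z = S' i z * wkb_Y S' k (n - i) z"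
      using lower[of "n - i"] by (simp add: S'_def)
  qed simp
  have "wkb_Y S (Suc k) n z = S 0 z * wkb_Y S k n z + S n z * S 0 z ^ k
     + (\<Sum>i\<in>{1..<n}. S i z * wkb_Y S k (n - i) z) + deriv (wkb_Y S k (n - 1)) z"
    by (rule wkb_Y_Suc_split[OF n])
  also have "\<dots> = S 0 z * (wkb_Y S' k n z + of_nat k * S 0 z ^ (k - 1) * S n z) + S n z * S 0 z ^ k
     + (\<Sum>i\<in>{1..<n}. S' i z * wkb_Y S' k (n - i) z) + deriv (wkb_Y S' k (n - 1)) z"
    using n lower[of "n - 1"] by (simp only: Suc.IH[folded S'_def] middle)
  also have "\<dots> = wkb_Y S' (Suc k) n z + of_nat (Suc k) * S 0 z ^ k * S n z"
    unfolding wkb_Y_Suc_split[OF n, of S'] S'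
    by (cases k) (simp_all add: algebra_simps)
  finally show ?case
    by (simp only: S'_def diff_Suc_1)
qed (use n in simp)

text \<open>Only the term \<open>k = M\<close> of the WKB equation involves \<open>S\<^sub>n\<close>, linearly by
  \<open>wkb_Y_linear_in_top\<close>; as \<open>\<rho>\<^sub>M S\<^sub>0^M = 1\<close>, that linear part is \<open>M S\<^sub>n / S\<^sub>0\<close>.\<close>
lemma wkb_S_recursion:
  assumes eq: "wkb_eq \<rho> Mo U S" and z: "z \<in> U" and n: "1 \<le> n" and Mo: "1 \<le> Mo"
    and lead: "poly (\<rho> Mo) z * S 0 z ^ Mo = 1"
  shows "of_nat Mo * S n z = - S 0 z *
     (\<Sum>k\<in>{k\<in>{1..Mo}. Mo - k \<le> n}. poly (\<rho> k) z * wkb_Y (S(n := (\<lambda>_. 0))) k (n - (Mo - k)) z)"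
proof -
  define S' where "S' = S(n := (\<lambda>_. 0))"
  define I where "I = {k\<in>{1..Mo}. Mo - k \<le> n}"
  define \<sigma> where "\<sigma> = poly (\<rho> Mo) z * (of_nat Mo * S 0 z ^ (Mo - 1) * S n z)"
  have "poly (\<rho> k) z * wkb_Y S k (n - (Mo - k)) z
      = poly (\<rho> k) z * wkb_Y S' k (n - (Mo - k)) z + (if k = Mo then \<sigma> else 0)" if "k \<in> I" for k
  proof (cases "k = Mo")
    case True
    then show ?thesis
      using wkb_Y_linear_in_top[OF n, of S Mo z] by (simp add: S'_def \<sigma>_def algebra_simps)
  next
    case False
    with that have "wkb_Y S k (n - (Mo - k)) = wkb_Y S' k (n - (Mo - k))"
      by (intro wkb_Y_cong) (auto simp: S'_def I_def)
    with False show ?thesis by simp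
  qed
  then have "(\<Sum>k\<in>I. poly (\<rho> k) z * wkb_Y S k (n - (Mo - k)) z)
      = (\<Sum>k\<in>I. poly (\<rho> k) z * wkb_Y S' k (n - (Mo - k)) z + (if k = Mo then \<sigma> else 0))"
    by (intro sum.cong) auto
  also have "\<dots> = (\<Sum>k\<in>I. poly (\<rho> k) z * wkb_Y S' k (n - (Mo - k)) z) + \<sigma>"
    using Mo by (simp add: sum.distrib I_def)
  finally have "(\<Sum>k\<in>I. poly (\<rho> k) z * wkb_Y S' k (n - (Mo - k)) z) = - \<sigma>"
    using eq z n unfolding wkb_eq_def I_def by (simp add: eq_neg_iff_add_eq_0)
  moreover have "S 0 z * \<sigma> = of_nat Mo * S n z * (poly (\<rho> Mo) z * S 0 z ^ Mo)"
    using Mo unfolding \<sigma>_def by (cases Mo) (simp_all add: algebra_simps)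
  ultimately show ?thesis
    using lead unfolding S'_def I_def by simp
qed

lemma wkb_Y_holomorphic:
  assumes "open D" and "\<And>i. S i holomorphic_on D"
  shows "wkb_Y S k m holomorphic_on D"
proof (induction k arbitrary: m)
  case 0
  then show ?case by (simp add: holomorphic_on_const)
next
  case (Suc k)
  have "(\<lambda>z. if m = 0 then 0 else deriv (wkb_Y S k (m - 1)) z) holomorphic_on D"
    using holomorphic_deriv[OF Suc.IH assms(1)] by (cases "m = 0") auto
  then show ?case
    by (simp only: wkb_Y.simps) (intro holomorphic_intros assms(2) Suc.IH)
qed

section \<open>Weighted estimates on a disc\<close>

lemma weighted_norm_wkb_Y_Suc_le:
  fixes T :: "nat \<Rightarrow> complex \<Rightarrow> complex" and d :: real
  assumes m: "1 \<le> m" and d: "0 \<le> d"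
  shows "norm (wkb_Y T (Suc k) m z) * d^m \<le>
    norm (T 0 z) * (norm (wkb_Y T k m z) * d^m) + (norm (T m z) * d^m) * norm (T 0 z) ^ k +
    (\<Sum>i\<in>{1..<m}. (norm (T i z) * d^i) * (norm (wkb_Y T k (m - i) z) * d^(m - i))) +
    norm (deriv (wkb_Y T k (m - 1)) z) * d^m"
proof -
  have "norm (wkb_Y T (Suc k) m z) \<le> norm (T 0 z * wkb_Y T k m z) + norm (T m z * T 0 z ^ k) +
     (\<Sum>i\<in>{1..<m}. norm (T i z * wkb_Y T k (m - i) z)) + norm (deriv (wkb_Y T k (m - 1)) z)"
    unfolding wkb_Y_Suc_split[OF m]
    by (intro order_trans[OF norm_triangle_ineq] add_mono order_refl norm_sum)
  then have "norm (wkb_Y T (Suc k) m z) * d^m \<le> (norm (T 0 z * wkb_Y T k m z) + norm (T m z * T 0 z ^ k) +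
     (\<Sum>i\<in>{1..<m}. norm (T i z * wkb_Y T k (m - i) z)) + norm (deriv (wkb_Y T k (m - 1)) z)) * d^m"
    using d by (intro mult_right_mono) auto
  also have "\<dots> = norm (T 0 z) * (norm (wkb_Y T k m z) * d^m) + (norm (T m z) * d^m) * norm (T 0 z) ^ k +
    (\<Sum>i\<in>{1..<m}. (norm (T i z) * d^i) * (norm (wkb_Y T k (m - i) z) * d^(m - i))) +
    norm (deriv (wkb_Y T k (m - 1)) z) * d^m"
    unfolding distrib_right sum_distrib_right
    by (intro arg_cong2[where f = "(+)"] refl sum.cong)
       (auto simp: norm_mult norm_power mult_ac simp flip: power_add)
  finally show ?thesis .
qed

text \<open>At the top level \<open>n\<close> the estimate for \<open>Y\<^sub>k\<close> improves on the weight \<open>\<gamma> K^n n!\<close> by this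
  factor, which is small for small \<open>\<gamma>\<close> and large \<open>K\<close>; this closes the induction on \<open>n\<close>.\<close>
definition nagumo_factor :: "real \<Rightarrow> real \<Rightarrow> real" where
  "nagumo_factor \<gamma> K = \<gamma> + 6 / K + 6 / (\<gamma> * K)"

text \<open>The setting of the induction step for \<open>S\<^sub>n\<close>: \<open>T\<close> is \<open>S\<close> with its \<open>n\<close>-th coefficient
  replaced by \<open>0\<close>, so that \<open>Y\<^sub>k\<close> computed from \<open>T\<close> only involves the \<open>S\<^sub>i\<close> already estimated.\<close>
locale wkb_nagumo =
  fixes T :: "nat \<Rightarrow> complex \<Rightarrow> complex" and z0 :: complex and R Q \<gamma> K :: real and n :: nat
  assumes holomorphic: "\<And>i. T i holomorphic_on ball z0 R"
    and bound_0: "\<And>z. z \<in> ball z0 R \<Longrightarrow> norm (T 0 z) \<le> Q"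
    and bound_lower: "\<And>i z. 1 \<le> i \<Longrightarrow> i < n \<Longrightarrow> z \<in> ball z0 R \<Longrightarrow>
       norm (T i z) * (R - dist z0 z)^i \<le> \<gamma> * (K^i * fact i)"
    and top_zero: "T n = (\<lambda>_. 0)" and n: "1 \<le> n"
    and Q: "0 \<le> Q" and \<gamma>: "0 < \<gamma>" "\<gamma> \<le> 1" and K: "1 \<le> K" "1 \<le> \<gamma> * K"
begin

lemma weight_nonneg: "0 \<le> \<gamma> * (K^j * fact j)"
  using \<gamma> K by simp

lemma deriv_wkb_Y_weighted_le:
  assumes m: "1 \<le> m" and z: "z \<in> ball z0 R" and c: "0 \<le> c"
    and Y: "\<And>j w. 1 \<le> j \<Longrightarrow> j < m \<Longrightarrow> w \<in> ball z0 R \<Longrightarrow>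
       norm (wkb_Y T k j w) * (R - dist z0 w)^j \<le> c * (\<gamma> * (K^j * fact j))"
  shows "norm (deriv (wkb_Y T k (m - 1)) z) * (R - dist z0 z)^m
     \<le> (6 / K * c + 6 / (\<gamma> * K) * Q^k) * (\<gamma> * (K^m * fact m))"
proof -
  have hol: "wkb_Y T k (m - 1) holomorphic_on ball z0 R"
    by (intro wkb_Y_holomorphic holomorphic) simp
  show ?thesis
  proof (cases "m = 1")
    case True
    have "norm (wkb_Y T k (m - 1) w) * (R - dist z0 w)^0 \<le> Q^k" if "w \<in> ball z0 R" for w
      using True bound_0[OF that] norm_ge_zero by (simp add: norm_power power_mono)
    from norm_deriv_weighted_le[OF hol this z] have
      "norm (deriv (wkb_Y T k (m - 1)) z) * (R - dist z0 z)^m \<le> 6 / (\<gamma> * K) * Q^k * (\<gamma> * (K^m * fact m))"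
      using True \<gamma> K by simp
    also have "\<dots> \<le> (6 / K * c + 6 / (\<gamma> * K) * Q^k) * (\<gamma> * (K^m * fact m))"
      using c K by (intro mult_right_mono weight_nonneg) auto
    finally show ?thesis .
  next
    case False
    then have "norm (deriv (wkb_Y T k (m - 1)) z) * (R - dist z0 z)^Suc (m - 1)
        \<le> 6 * real (Suc (m - 1)) * (c * (\<gamma> * (K^(m - 1) * fact (m - 1))))"
      using m Y by (intro norm_deriv_weighted_le[OF hol _ z]) auto
    also have "\<dots> = 6 / K * c * (\<gamma> * (K^m * fact m))"
      using m K by (simp add: fact_reduce[of m] power_eq_if field_simps)
    also have "\<dots> \<le> (6 / K * c + 6 / (\<gamma> * K) * Q^k) * (\<gamma> * (K^m * fact m))"
      using \<gamma> K Q by (intro mult_right_mono weight_nonneg) auto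
    finally show ?thesis
      using m by simp
  qed
qed

lemma wkb_Y_Suc_weighted_le:
  assumes m: "1 \<le> m" "m \<le> n" and z: "z \<in> ball z0 R" and c: "0 \<le> c"
    and Y_m: "norm (wkb_Y T k m z) * (R - dist z0 z)^m \<le> a"
    and T_m: "norm (T m z) * (R - dist z0 z)^m \<le> \<tau>"
    and Y: "\<And>j w. 1 \<le> j \<Longrightarrow> j < m \<Longrightarrow> w \<in> ball z0 R \<Longrightarrow>
       norm (wkb_Y T k j w) * (R - dist z0 w)^j \<le> c * (\<gamma> * (K^j * fact j))"
  shows "norm (wkb_Y T (Suc k) m z) * (R - dist z0 z)^m
     \<le> Q * a + \<tau> * Q^k + (\<gamma> * c + 6 / K * c + 6 / (\<gamma> * K) * Q^k) * (\<gamma> * (K^m * fact m))"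
proof -
  define d where "d = R - dist z0 z"
  have d: "0 < d" using z d_def by simp
  have "(\<Sum>i\<in>{1..<m}. (norm (T i z) * d^i) * (norm (wkb_Y T k (m - i) z) * d^(m - i)))
      \<le> \<gamma> * (c * \<gamma>) * (K^m * fact m)"
    using m z d \<gamma> K c bound_lower Y unfolding d_def
    by (intro gevrey_convolution_le) (auto simp: mult.assoc)
  moreover have "norm (T 0 z) * (norm (wkb_Y T k m z) * d^m) \<le> Q * a"
    using bound_0[OF z] Y_m d Q unfolding d_def by (intro mult_mono) auto
  moreover have "(norm (T m z) * d^m) * norm (T 0 z) ^ k \<le> \<tau> * Q^k"
    using bound_0[OF z] T_m d unfolding d_def
    by (intro mult_mono power_mono) (auto intro: order_trans[OF _ T_m])
  ultimately show ?thesis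
    using weighted_norm_wkb_Y_Suc_le[OF m(1), of d T k z] d
      deriv_wkb_Y_weighted_le[OF m(1) z c Y]
    unfolding d_def by (simp add: algebra_simps)
qed

lemma wkb_Y_lower_weighted_le:
  assumes "1 \<le> m" "m < n" "z \<in> ball z0 R"
  shows "norm (wkb_Y T k m z) * (R - dist z0 z)^m \<le> real k * (Q + 7)^k * (\<gamma> * (K^m * fact m))"
  using assms
proof (induction k arbitrary: m z)
  case (Suc k)
  define L where "L = Q + 7"
  have L: "7 \<le> L" "Q^k \<le> L^k" using Q by (auto simp: L_def intro: power_mono)
  have "norm (wkb_Y T (Suc k) m z) * (R - dist z0 z)^m
     \<le> Q * (real k * L^k * (\<gamma> * (K^m * fact m))) + \<gamma> * (K^m * fact m) * Q^k
       + (\<gamma> * (real k * L^k) + 6 / K * (real k * L^k) + 6 / (\<gamma> * K) * Q^k) * (\<gamma> * (K^m * fact m))"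
    using Suc L_def Q by (intro wkb_Y_Suc_weighted_le bound_lower) (auto simp: mult.assoc)
  also have "\<dots> = (Q * (real k * L^k) + Q^k
      + (\<gamma> * (real k * L^k) + 6 / K * (real k * L^k) + 6 / (\<gamma> * K) * Q^k)) * (\<gamma> * (K^m * fact m))"
    by (simp only: ring_distribs mult_ac)
  also have "\<dots> \<le> real (Suc k) * L^Suc k * (\<gamma> * (K^m * fact m))"
  proof (rule mult_right_mono[OF _ weight_nonneg])
    have "6 / K \<le> 6" "6 / (\<gamma> * K) \<le> 6"
      using K by (auto simp: divide_le_eq)
    moreover have "\<gamma> * (real k * L^k) \<le> real k * L^k"
      using \<gamma> L by (simp add: mult_left_le_one_le)
    ultimately have "Q * (real k * L^k) + Q^k + (\<gamma> * (real k * L^k) + 6 / K * (real k * L^k) + 6 / (\<gamma> * K) * Q^k)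
        \<le> Q * (real k * L^k) + Q^k + (real k * L^k + 6 * (real k * L^k) + 6 * Q^k)"
      using \<gamma> L Q by (intro add_mono mult_right_mono order_refl) auto
    also have "\<dots> \<le> L * (real k * L^k) + 7 * L^k"
      using L by (simp add: L_def algebra_simps)
    also have "\<dots> \<le> real (Suc k) * L^Suc k"
      using L mult_right_mono[of 7 L "L^k"] by (simp add: algebra_simps)
    finally show "Q * (real k * L^k) + Q^k
        + (\<gamma> * (real k * L^k) + 6 / K * (real k * L^k) + 6 / (\<gamma> * K) * Q^k) \<le> real (Suc k) * L^Suc k" .
  qed
  finally show ?case
    unfolding L_def .
qed simp

lemma nagumo_factor_nonneg: "0 \<le> nagumo_factor \<gamma> K"
  using \<gamma> K by (simp add: nagumo_factor_def)

lemma inverse_le_nagumo_factor: "1 / K \<le> nagumo_factor \<gamma> K"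
proof -
  have "0 \<le> 6 / (\<gamma> * K)" "1 / K \<le> 6 / K"
    using \<gamma> K by (simp_all add: divide_right_mono)
  then show ?thesis
    using \<gamma> unfolding nagumo_factor_def by linarith
qed

lemma wkb_Y_top_weighted_le:
  assumes "z \<in> ball z0 R"
  shows "norm (wkb_Y T k n z) * (R - dist z0 z)^n
    \<le> nagumo_factor \<gamma> K * real k * (Q + 7)^k * (\<gamma> * (K^n * fact n))"
  using assms
proof (induction k arbitrary: z)
  case (Suc k)
  define L where "L = Q + 7"
  define \<theta> where "\<theta> = nagumo_factor \<gamma> K"
  have L: "7 \<le> L" "Q^k \<le> L^k" using Q by (auto simp: L_def intro: power_mono)
  have "norm (wkb_Y T (Suc k) n z) * (R - dist z0 z)^n
     \<le> Q * (\<theta> * real k * L^k * (\<gamma> * (K^n * fact n))) + 0 * Q^k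
       + (\<gamma> * (real k * L^k) + 6 / K * (real k * L^k) + 6 / (\<gamma> * K) * Q^k) * (\<gamma> * (K^n * fact n))"
    using Suc n top_zero Q unfolding L_def \<theta>_def
    by (intro wkb_Y_Suc_weighted_le wkb_Y_lower_weighted_le) auto
  also have "\<dots> = (Q * \<theta> * (real k * L^k) + (\<gamma> + 6 / K) * (real k * L^k) + 6 / (\<gamma> * K) * Q^k)
      * (\<gamma> * (K^n * fact n))"
    by (simp only: mult_zero_left add_0_right ring_distribs mult_ac)
  also have "\<dots> \<le> \<theta> * real (Suc k) * L^Suc k * (\<gamma> * (K^n * fact n))"
  proof (rule mult_right_mono[OF _ weight_nonneg])
    have "\<gamma> + 6 / K \<le> \<theta>" "6 / (\<gamma> * K) \<le> \<theta>" "0 \<le> \<theta>"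
      using \<gamma> K nagumo_factor_nonneg by (auto simp: \<theta>_def nagumo_factor_def)
    then have "Q * \<theta> * (real k * L^k) + (\<gamma> + 6 / K) * (real k * L^k) + 6 / (\<gamma> * K) * Q^k
        \<le> Q * \<theta> * (real k * L^k) + \<theta> * (real k * L^k) + \<theta> * L^k"
      using L Q \<gamma> K by (intro add_mono mult_mono order_refl) auto
    also have "\<dots> \<le> \<theta> * (L * (real k * L^k) + L * L^k)"
      using L nagumo_factor_nonneg mult_right_mono[of 7 L "L^k"]
      by (simp add: L_def \<theta>_def algebra_simps)
    finally show "Q * \<theta> * (real k * L^k) + (\<gamma> + 6 / K) * (real k * L^k) + 6 / (\<gamma> * K) * Q^k
        \<le> \<theta> * real (Suc k) * L^Suc k"
      by (simp add: algebra_simps)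
  qed
  finally show ?case
    unfolding L_def \<theta>_def .
qed (use n in simp)

lemma one_le_nagumo_factor_weight: "1 \<le> nagumo_factor \<gamma> K * (\<gamma> * (K^n * fact n))"
proof -
  have "K^1 * 1 \<le> K^n * fact n"
    using K n by (intro mult_mono power_increasing) (auto simp: fact_ge_1)
  then have "1 \<le> 6 / (\<gamma> * K) * (\<gamma> * (K^n * fact n))"
    using \<gamma> K by (simp add: field_simps)
  also have "\<dots> \<le> nagumo_factor \<gamma> K * (\<gamma> * (K^n * fact n))"
    using weight_nonneg \<gamma> K by (intro mult_right_mono) (auto simp: nagumo_factor_def)
  finally show ?thesis .
qed

lemma wkb_Y_weighted_le_uniform:
  assumes k: "k \<le> Mo" and Mo: "1 \<le> Mo" and m: "m \<le> n" and z: "z \<in> ball z0 R"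
  shows "norm (wkb_Y T k m z) * (R - dist z0 z)^m
    \<le> nagumo_factor \<gamma> K * real Mo * (Q + 7)^Mo * (\<gamma> * (K^n * fact n))"
proof -
  define L where "L = Q + 7"
  define \<theta> where "\<theta> = nagumo_factor \<gamma> K"
  have L: "1 \<le> L" "L^k \<le> L^Mo"
    using Q k by (auto simp: L_def intro: power_increasing)
  moreover have "Q^k \<le> L^k"
    using Q by (simp add: L_def power_mono)
  ultimately have L: "1 \<le> L" "L^k \<le> L^Mo" "Q^k \<le> L^Mo"
    by auto
  have \<theta>_weight: "1 \<le> \<theta> * (\<gamma> * (K^n * fact n))"
    unfolding \<theta>_def by (rule one_le_nagumo_factor_weight)
  consider "m = 0" | "1 \<le> m" "m < n" | "m = n"
    using m by linarith
  then show ?thesis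
  proof cases
    case 1
    have "norm (wkb_Y T k m z) * (R - dist z0 z)^m = norm (T 0 z) ^ k"
      using 1 by (simp add: norm_power)
    also have "\<dots> \<le> Q^k"
      by (rule power_mono[OF bound_0[OF z] norm_ge_zero])
    also have "\<dots> \<le> L^Mo"
      by (rule L)
    also have "\<dots> \<le> L^Mo * (\<theta> * (\<gamma> * (K^n * fact n)) * real Mo)"
      using \<theta>_weight Mo L mult_mono[of 1 "\<theta> * (\<gamma> * (K^n * fact n))" 1 "real Mo"]
      by (intro mult_le_cancel_left1[THEN iffD2]) auto
    finally show ?thesis
      unfolding L_def \<theta>_def by (simp add: mult_ac)
  next
    case 2
    then have "K^m * fact m \<le> K^n * fact n / K"
      using K by (intro power_mult_fact_le_divide) auto
    then have "real k * L^k * (\<gamma> * (K^m * fact m)) \<le> real Mo * L^Mo * (\<gamma> * (K^n * fact n / K))"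
      using k L \<gamma> K weight_nonneg[of m] by (intro mult_mono) auto
    then have "norm (wkb_Y T k m z) * (R - dist z0 z)^m \<le> real Mo * L^Mo * (\<gamma> * (K^n * fact n / K))"
      using wkb_Y_lower_weighted_le[OF 2 z, of k] unfolding L_def by linarith
    also have "\<dots> = 1 / K * (real Mo * L^Mo * (\<gamma> * (K^n * fact n)))"
      by simp
    also have "\<dots> \<le> \<theta> * (real Mo * L^Mo * (\<gamma> * (K^n * fact n)))"
      unfolding \<theta>_def using L weight_nonneg[of n]
      by (intro mult_right_mono inverse_le_nagumo_factor) auto
    finally show ?thesis unfolding L_def \<theta>_def by (simp add: mult.assoc)
  next
    case 3
    have "\<theta> * (real k * L^k) * (\<gamma> * (K^n * fact n)) \<le> \<theta> * (real Mo * L^Mo) * (\<gamma> * (K^n * fact n))"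
      using k L nagumo_factor_nonneg weight_nonneg
      by (intro mult_right_mono mult_left_mono mult_mono) (auto simp: \<theta>_def)
    then show ?thesis
      using 3 wkb_Y_top_weighted_le[OF z, of k] unfolding L_def \<theta>_def by (simp add: mult.assoc)
  qed
qed

lemma norm_wkb_sum_weighted_le:
  assumes Mo: "1 \<le> Mo" and z: "z \<in> ball z0 R"
    and r: "\<And>k. k \<in> {1..Mo} \<Longrightarrow> norm (r k) \<le> P"
  shows "norm (\<Sum>k\<in>{k\<in>{1..Mo}. Mo - k \<le> n}. r k * wkb_Y T k (n - (Mo - k)) z) * (R - dist z0 z)^n
    \<le> real Mo * P * max 1 R ^ Mo * (nagumo_factor \<gamma> K * real Mo * (Q + 7)^Mo * (\<gamma> * (K^n * fact n)))"
proof -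
  define d where "d = R - dist z0 z"
  define B where "B = nagumo_factor \<gamma> K * real Mo * (Q + 7)^Mo * (\<gamma> * (K^n * fact n))"
  have d: "0 < d" "d \<le> max 1 R"
    using z zero_le_dist[of z0 z] by (auto simp: d_def le_max_iff_disj)
  have P: "0 \<le> P"
    using order_trans[OF norm_ge_zero r[of Mo]] Mo by auto
  have summand: "norm (r k * wkb_Y T k (n - (Mo - k)) z) * d^n \<le> P * max 1 R ^ Mo * B"
    if k: "k \<in> {1..Mo}" "Mo - k \<le> n" for k
  proof -
    have "d^(Mo - k) \<le> max 1 R ^ Mo"
      using d by (intro order_trans[OF power_mono power_increasing]) auto
    then have "norm (r k) * d^(Mo - k) \<le> P * max 1 R ^ Mo"
      using r[OF k(1)] d P by (intro mult_mono) auto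
    moreover have "norm (wkb_Y T k (n - (Mo - k)) z) * d^(n - (Mo - k)) \<le> B"
      unfolding B_def d_def using k Mo z by (intro wkb_Y_weighted_le_uniform) auto
    ultimately have "(norm (r k) * d^(Mo - k)) * (norm (wkb_Y T k (n - (Mo - k)) z) * d^(n - (Mo - k)))
        \<le> P * max 1 R ^ Mo * B"
      using d P by (rule_tac mult_mono) auto
    moreover have "d^n = d^(Mo - k) * d^(n - (Mo - k))"
      using k(2) by (simp flip: power_add)
    ultimately show ?thesis
      by (simp only: norm_mult mult_ac)
  qed
  have "norm (\<Sum>k\<in>{k\<in>{1..Mo}. Mo - k \<le> n}. r k * wkb_Y T k (n - (Mo - k)) z) * d^n
      \<le> (\<Sum>k\<in>{k\<in>{1..Mo}. Mo - k \<le> n}. norm (r k * wkb_Y T k (n - (Mo - k)) z) * d^n)"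
    unfolding sum_distrib_right[symmetric] using d by (intro mult_right_mono norm_sum) auto
  also have "\<dots> \<le> (\<Sum>k\<in>{k\<in>{1..Mo}. Mo - k \<le> n}. P * max 1 R ^ Mo * B)"
    using summand by (intro sum_mono) auto
  also have "\<dots> \<le> (\<Sum>k\<in>{1..Mo}. P * max 1 R ^ Mo * B)"
    using P nagumo_factor_nonneg weight_nonneg[of n] Q by (intro sum_mono2) (auto simp: B_def)
  finally show ?thesis
    unfolding d_def B_def by (simp add: mult_ac)
qed

end

text \<open>With \<open>E = c + 1\<close>, \<open>\<gamma> = 1/(3E)\<close> and \<open>K = 54 E\<^sup>2\<close> one has \<open>\<gamma> K = 18 E\<close>, hence
  \<open>nagumo_factor \<gamma> K = 1/(3E) + 1/(9E\<^sup>2) + 1/(3E) \<le> 1/E\<close>.\<close>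
lemma nagumo_factor_small:
  fixes c :: real
  assumes "0 \<le> c"
  obtains \<gamma> K where "0 < \<gamma>" "\<gamma> \<le> 1" "1 \<le> K" "1 \<le> \<gamma> * K" "nagumo_factor \<gamma> K * c \<le> 1"
proof
  define E where "E = c + 1"
  have E: "1 \<le> E" "1 \<le> E^2"
    using assms by (simp_all add: E_def one_le_power)
  show "0 < 1 / (3 * E)" "1 / (3 * E) \<le> 1" "1 \<le> 54 * E^2" "1 \<le> 1 / (3 * E) * (54 * E^2)"
    using E by (simp_all add: power2_eq_square field_simps)
  have "nagumo_factor (1 / (3 * E)) (54 * E^2) \<le> 1 / E"
    using E by (simp add: nagumo_factor_def power2_eq_square field_simps)
  then have "nagumo_factor (1 / (3 * E)) (54 * E^2) * c \<le> 1 / E * c"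
    using assms by (rule mult_right_mono)
  also have "\<dots> \<le> 1"
    using assms by (simp add: E_def)
  finally show "nagumo_factor (1 / (3 * E)) (54 * E^2) * c \<le> 1" .
qed

lemma wkb_S_weighted_le:
  fixes S r :: "nat \<Rightarrow> complex \<Rightarrow> complex"
  assumes hol: "\<And>i. S i holomorphic_on ball z0 R"
    and rec: "\<And>n z. 1 \<le> n \<Longrightarrow> z \<in> ball z0 R \<Longrightarrow> of_nat Mo * S n z = - S 0 z *
       (\<Sum>k\<in>{k\<in>{1..Mo}. Mo - k \<le> n}. r k z * wkb_Y (S(n := (\<lambda>_. 0))) k (n - (Mo - k)) z)"
    and S0: "\<And>z. z \<in> ball z0 R \<Longrightarrow> norm (S 0 z) \<le> Q"
    and r: "\<And>k z. k \<in> {1..Mo} \<Longrightarrow> z \<in> ball z0 R \<Longrightarrow> norm (r k z) \<le> P"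
    and Q: "0 \<le> Q" and P: "0 \<le> P" and Mo: "1 \<le> Mo"
  obtains \<gamma> K where "0 < \<gamma>" "1 \<le> K"
    "\<And>n z. 1 \<le> n \<Longrightarrow> z \<in> ball z0 R \<Longrightarrow> norm (S n z) * (R - dist z0 z)^n \<le> \<gamma> * (K^n * fact n)"
proof -
  define c where "c = Q * (real Mo * P * max 1 R ^ Mo) * (real Mo * (Q + 7)^Mo)"
  obtain \<gamma> K where \<gamma>K: "0 < \<gamma>" "\<gamma> \<le> 1" "1 \<le> K" "1 \<le> \<gamma> * K"
    and small: "nagumo_factor \<gamma> K * c \<le> 1"
    using nagumo_factor_small[of c] Q P by (auto simp: c_def)
  have "norm (S n z) * (R - dist z0 z)^n \<le> \<gamma> * (K^n * fact n)" if "1 \<le> n" "z \<in> ball z0 R" for n z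
    using that
  proof (induction n arbitrary: z rule: less_induct)
    case (less n)
    interpret wkb_nagumo "S(n := (\<lambda>_. 0))" z0 R Q \<gamma> K n
      using hol S0 less \<gamma>K Q by unfold_locales auto
    define W where "W = \<gamma> * (K^n * fact n)"
    have "real Mo * (norm (S n z) * (R - dist z0 z)^n)
        = norm (S 0 z) * (norm (\<Sum>k\<in>{k\<in>{1..Mo}. Mo - k \<le> n}. r k z * wkb_Y (S(n := (\<lambda>_. 0))) k (n - (Mo - k)) z)
          * (R - dist z0 z)^n)"
      using arg_cong[OF rec[OF less.prems], of norm] by (simp add: norm_mult)
    also have "\<dots> \<le> Q * (real Mo * P * max 1 R ^ Mo * (nagumo_factor \<gamma> K * real Mo * (Q + 7)^Mo * W))"
      unfolding W_def
      by (rule mult_mono[OF S0[OF less.prems(2)] norm_wkb_sum_weighted_le[OF Mo less.prems(2)]])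
         (use r[OF _ less.prems(2)] Q less.prems(2) in auto)
    also have "\<dots> = nagumo_factor \<gamma> K * c * W"
      by (simp add: c_def mult_ac)
    also have "\<dots> \<le> W"
      using mult_right_mono[OF small weight_nonneg[of n]] by (simp add: W_def)
    finally have "real Mo * (norm (S n z) * (R - dist z0 z)^n) \<le> W" .
    moreover have "norm (S n z) * (R - dist z0 z)^n \<le> real Mo * (norm (S n z) * (R - dist z0 z)^n)"
      using Mo less.prems mult_right_mono[of 1 "real Mo" "norm (S n z) * (R - dist z0 z)^n"] by simp
    ultimately show ?case
      unfolding W_def by linarith
  qed
  then show thesis
    using that \<gamma>K by auto
qed

section \<open>Gevrey-bounded families of functions\<close>

definition gevrey_bounded :: "(nat \<Rightarrow> 'a \<Rightarrow> 'b::real_normed_vector) \<Rightarrow> 'a set \<Rightarrow> bool" where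
  "gevrey_bounded f A \<longleftrightarrow> (\<exists>B C. 0 \<le> B \<and> 1 \<le> C \<and> (\<forall>n. \<forall>z\<in>A. norm (f n z) \<le> B * C^n * fact n))"

lemma gevrey_boundedI:
  assumes "0 \<le> B" "1 \<le> C" "\<And>n z. z \<in> A \<Longrightarrow> norm (f n z) \<le> B * C^n * fact n"
  shows "gevrey_bounded f A"
  using assms unfolding gevrey_bounded_def by blast

lemma gevrey_bounded_subset: "gevrey_bounded f B \<Longrightarrow> A \<subseteq> B \<Longrightarrow> gevrey_bounded f A"
  unfolding gevrey_bounded_def by blast

lemma gevrey_bounded_Un:
  assumes "gevrey_bounded f A" "gevrey_bounded f B"
  shows "gevrey_bounded f (A \<union> B)"
proof -
  obtain B1 C1 where 1: "0 \<le> B1" "1 \<le> C1" "\<And>n z. z \<in> A \<Longrightarrow> norm (f n z) \<le> B1 * C1^n * fact n"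
    using assms(1) unfolding gevrey_bounded_def by blast
  obtain B2 C2 where 2: "0 \<le> B2" "1 \<le> C2" "\<And>n z. z \<in> B \<Longrightarrow> norm (f n z) \<le> B2 * C2^n * fact n"
    using assms(2) unfolding gevrey_bounded_def by blast
  have mono: "Bi * Ci^n * fact n \<le> (B1 + B2) * max C1 C2 ^ n * fact n"
    if "0 \<le> Bi" "Bi \<le> B1 + B2" "1 \<le> Ci" "Ci \<le> max C1 C2" for Bi Ci :: real and n
    using that by (intro mult_right_mono mult_mono power_mono) auto
  show ?thesis
  proof (rule gevrey_boundedI[of "B1 + B2" "max C1 C2"])
    fix n z assume "z \<in> A \<union> B"
    then show "norm (f n z) \<le> (B1 + B2) * max C1 C2 ^ n * fact n"
    proof
      assume "z \<in> A"
      show ?thesis by (rule order.trans[OF 1(3)[OF \<open>z \<in> A\<close>] mono]) (use 1 2 in auto)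
    next
      assume "z \<in> B"
      show ?thesis by (rule order.trans[OF 2(3)[OF \<open>z \<in> B\<close>] mono]) (use 1 2 in auto)
    qed
  qed (use 1 2 in auto)
qed

lemma gevrey_bounded_UN:
  "finite I \<Longrightarrow> (\<And>i. i \<in> I \<Longrightarrow> gevrey_bounded f (A i)) \<Longrightarrow> gevrey_bounded f (\<Union>i\<in>I. A i)"
proof (induction I rule: finite_induct)
  case empty
  show ?case by (rule gevrey_boundedI[of 0 1]) auto
next
  case (insert i I)
  then show ?case by (simp add: gevrey_bounded_Un)
qed

lemma gevrey_bounded_compact:
  assumes "compact A" and local: "\<And>z. z \<in> A \<Longrightarrow> \<exists>e>0. gevrey_bounded f (ball z e)"
  shows "gevrey_bounded f A"
proof -
  obtain e where e: "\<forall>z\<in>A. e z > 0 \<and> gevrey_bounded f (ball z (e z))"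
    using bchoice[of A "\<lambda>z e. e > 0 \<and> gevrey_bounded f (ball z e)"] local by blast
  then have "A \<subseteq> (\<Union>z\<in>A. ball z (e z))"
    by auto
  then obtain F where "F \<subseteq> A" "finite F" "A \<subseteq> (\<Union>z\<in>F. ball z (e z))"
    using compactE_image[OF \<open>compact A\<close>, of A "\<lambda>z. ball z (e z)"] by auto
  then show ?thesis
    using e by (rule_tac gevrey_bounded_subset[OF gevrey_bounded_UN]) auto
qed

lemma gevrey_bounded_Suc:
  fixes f :: "nat \<Rightarrow> 'a \<Rightarrow> 'b::real_normed_vector"
  assumes "gevrey_bounded f A"
  shows "gevrey_bounded (\<lambda>n. f (Suc n)) A"
proof -
  obtain B C where BC: "0 \<le> B" "1 \<le> C" "\<And>n z. z \<in> A \<Longrightarrow> norm (f n z) \<le> B * C^n * fact n"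
    using assms unfolding gevrey_bounded_def by blast
  have "B * C^Suc n * fact (Suc n) \<le> (B * C) * (2 * C)^n * fact n" for n
    using BC mult_left_mono[OF fact_Suc_le_two_power_mult_fact[of n], of "B * C^Suc n"]
    by (simp add: power_mult_distrib mult_ac)
  then show ?thesis
    using BC by (intro gevrey_boundedI[of "B * C" "2 * C"] order.trans[OF BC(3)]) auto
qed

lemma gevrey_bounded_mult:
  assumes "gevrey_bounded f A" "\<And>z. z \<in> A \<Longrightarrow> norm (h z) \<le> M"
  shows "gevrey_bounded (\<lambda>n z. h z * f n z :: 'b::real_normed_div_algebra) A"
proof -
  obtain B C where BC: "0 \<le> B" "1 \<le> C" "\<And>n z. z \<in> A \<Longrightarrow> norm (f n z) \<le> B * C^n * fact n"
    using assms(1) unfolding gevrey_bounded_def by blast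
  have "norm (h z * f n z) \<le> (max M 0 * B) * C^n * fact n" if "z \<in> A" for n z
    unfolding norm_mult mult.assoc using BC assms(2)[OF that] that
    by (intro mult_mono) (auto simp: mult_ac)
  then show ?thesis
    using BC by (intro gevrey_boundedI[of "max M 0 * B" C]) auto
qed

lemma gevrey_bounded_fps_exp_compose:
  fixes g :: "nat \<Rightarrow> 'a \<Rightarrow> complex"
  assumes "gevrey_bounded g A"
  shows "gevrey_bounded (\<lambda>n z. (fps_exp 1 oo Abs_fps (\<lambda>m. if m = 0 then 0 else g m z)) $ n) A"
proof -
  obtain B C where BC: "0 \<le> B" "1 \<le> C" "\<And>n z. z \<in> A \<Longrightarrow> norm (g n z) \<le> B * C^n * fact n"
    using assms unfolding gevrey_bounded_def by blast
  show ?thesis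
  proof (rule gevrey_boundedI[of 1 "C * (B + 1)"])
    fix n z assume "z \<in> A"
    then show "norm ((fps_exp 1 oo Abs_fps (\<lambda>m. if m = 0 then 0 else g m z)) $ n) \<le> 1 * (C * (B + 1))^n * fact n"
      using BC by (simp add: norm_fps_exp_compose_nth_le)
  qed (use BC mult_mono[of 1 C 1 "B + 1"] in auto)
qed

lemma gevrey_bounded_primitive:
  fixes G S :: "nat \<Rightarrow> 'a::real_normed_field \<Rightarrow> 'a"
  assumes A: "convex A" "bounded A"
    and der: "\<And>k z. z \<in> A \<Longrightarrow> (G k has_field_derivative S k z) (at z within A)"
    and S: "gevrey_bounded S A" and w: "w \<in> A" and G: "gevrey_bounded G {w}"
  shows "gevrey_bounded G A"
proof -
  obtain B C where BC: "0 \<le> B" "1 \<le> C" "\<And>n z. z \<in> A \<Longrightarrow> norm (S n z) \<le> B * C^n * fact n"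
    using S unfolding gevrey_bounded_def by blast
  obtain B' C' where BC': "0 \<le> B'" "1 \<le> C'" "\<And>n. norm (G n w) \<le> B' * C'^n * fact n"
    using G unfolding gevrey_bounded_def by blast
  define D where "D = diameter A"
  have D: "0 \<le> D" using diameter_ge_0[OF A(2)] by (simp add: D_def)
  have "norm (G n z) \<le> (B' + D * B) * max C C' ^ n * fact n" if z: "z \<in> A" for n z
  proof -
    have "norm (G n z - G n w) \<le> B * C^n * fact n * norm (z - w)"
      using field_differentiable_bound[OF A(1) der BC(3) z w] by simp
    also have "\<dots> \<le> B * C^n * fact n * D"
      using BC diameter_bounded_bound[OF A(2) z w] unfolding D_def by (simp add: dist_norm mult_left_mono)
    finally have "norm (G n z) \<le> B' * C'^n * fact n + D * B * C^n * fact n"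
      using BC'(3)[of n] norm_triangle_ineq2[of "G n z" "G n w"] by (simp add: mult_ac)
    also have "\<dots> \<le> (B' + D * B) * max C C' ^ n * fact n"
      using BC BC' D by (simp add: algebra_simps add_mono mult_left_mono mult_right_mono power_mono)
    finally show ?thesis .
  qed
  then show ?thesis
    using BC BC' D by (rule_tac gevrey_boundedI[of "B' + D * B" "max C C'"]) auto
qed

lemma gevrey_bounded_primitive_locally:
  fixes G S :: "nat \<Rightarrow> complex \<Rightarrow> complex"
  assumes U: "open U" "connected U" and zs: "zs \<in> U" and z: "z \<in> U"
    and der: "\<And>k z. z \<in> U \<Longrightarrow> (G k has_field_derivative S k z) (at z)"
    and G_zs: "gevrey_bounded G {zs}"
    and S: "\<And>z. z \<in> U \<Longrightarrow> \<exists>r>0. ball z r \<subseteq> U \<and> gevrey_bounded S (ball z r)"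
  shows "\<exists>r>0. gevrey_bounded G (ball z r)"
proof -
  have on_ball: "gevrey_bounded G (ball a r)"
    if "ball a r \<subseteq> U" "gevrey_bounded S (ball a r)" "w \<in> ball a r" "gevrey_bounded G {w}" for a r w
  proof (rule gevrey_bounded_primitive[OF convex_ball bounded_ball _ that(2-4)])
    fix k x assume "x \<in> ball a r"
    with that(1) have "x \<in> U" by blast
    then show "(G k has_field_derivative S k x) (at x within ball a r)"
      by (rule has_field_derivative_at_within[OF der])
  qed
  have "gevrey_bounded G {z}"
  proof (rule connected_induction_simple[OF U(2) zs z, where P = "\<lambda>w. gevrey_bounded G {w}"])
    show "gevrey_bounded G {zs}" by (fact G_zs)
  next
    fix a assume "a \<in> U"
    then obtain r where r: "0 < r" "ball a r \<subseteq> U" "gevrey_bounded S (ball a r)"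
      using S by blast
    then have "\<forall>x\<in>ball a r. \<forall>y\<in>ball a r. gevrey_bounded G {x} \<longrightarrow> gevrey_bounded G {y}"
      using on_ball by (blast intro: gevrey_bounded_subset)
    then show "\<exists>T. openin (top_of_set U) T \<and> a \<in> T \<and>
        (\<forall>x\<in>T. \<forall>y\<in>T. gevrey_bounded G {x} \<longrightarrow> gevrey_bounded G {y})"
      using r U(1) by (intro exI[of _ "ball a r"]) (auto simp: openin_open_eq)
  qed
  moreover obtain r where "0 < r" "ball z r \<subseteq> U" "gevrey_bounded S (ball z r)"
    using S[OF z] by blast
  ultimately show ?thesis
    using on_ball[of z r z] by auto
qed

lemma gevrey_bounded_half_ball:
  fixes S :: "nat \<Rightarrow> 'a::metric_space \<Rightarrow> 'b::real_normed_vector"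
  assumes R: "0 < R" and S0: "\<And>z. z \<in> ball z0 R \<Longrightarrow> norm (S 0 z) \<le> Q"
    and S: "\<And>n z. 1 \<le> n \<Longrightarrow> z \<in> ball z0 R \<Longrightarrow> norm (S n z) * (R - dist z0 z)^n \<le> \<gamma> * (K^n * fact n)"
    and "0 \<le> Q" "0 \<le> \<gamma>" "0 \<le> K"
  shows "gevrey_bounded S (ball z0 (R / 2))"
proof (rule gevrey_boundedI[of "max Q \<gamma>" "max 1 (2 * K / R)"])
  fix n z assume z: "z \<in> ball z0 (R / 2)"
  then have z_R: "z \<in> ball z0 R"
    using R subset_ball[of "R / 2" R z0] by auto
  show "norm (S n z) \<le> max Q \<gamma> * max 1 (2 * K / R) ^ n * fact n"
  proof (cases "n = 0")
    case True
    then show ?thesis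
      using S0[OF z_R] by (simp add: le_max_iff_disj)
  next
    case False
    have "R / 2 \<le> R - dist z0 z"
      using z by simp
    then have "norm (S n z) * (R / 2)^n \<le> norm (S n z) * (R - dist z0 z)^n"
      using R by (intro mult_left_mono power_mono) auto
    also have "\<dots> \<le> \<gamma> * (K^n * fact n)"
      using False z_R by (intro S) auto
    finally have "norm (S n z) \<le> \<gamma> * (2 * K / R)^n * fact n"
      using R by (simp add: field_simps power_divide)
    also have "\<dots> \<le> max Q \<gamma> * max 1 (2 * K / R) ^ n * fact n"
      using assms(4-6) R by (intro mult_right_mono mult_mono power_mono) auto
    finally show ?thesis .
  qed
qed (use assms(4) in auto)

lemma wkb_S_locally_gevrey_bounded:
  assumes U: "open U" and hol: "\<And>k. S k holomorphic_on U" and eq: "wkb_eq \<rho> Mo U S"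
    and lead: "\<And>z. z \<in> U \<Longrightarrow> poly (\<rho> Mo) z * S 0 z ^ Mo = 1" and Mo: "1 \<le> Mo" and z0: "z0 \<in> U"
  shows "\<exists>r>0. ball z0 r \<subseteq> U \<and> gevrey_bounded S (ball z0 r)"
proof -
  obtain R where R: "0 < R" "cball z0 R \<subseteq> U"
    using U z0 open_contains_cball by blast
  then have ball_U: "ball z0 R \<subseteq> U"
    using ball_subset_cball by blast
  obtain Q where Q: "0 \<le> Q" "\<And>z. z \<in> cball z0 R \<Longrightarrow> norm (S 0 z) \<le> Q"
    using continuous_on_compact_bound[OF compact_cball, of z0 R "S 0"]
      holomorphic_on_imp_continuous_on[OF holomorphic_on_subset[OF hol R(2)]] by blast
  have "continuous_on (cball z0 R) (\<lambda>z. \<Sum>k\<in>{1..Mo}. norm (poly (\<rho> k) z))"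
    by (intro continuous_intros)
  then obtain P where P: "0 \<le> P" "\<And>z. z \<in> cball z0 R \<Longrightarrow> norm (\<Sum>k\<in>{1..Mo}. norm (poly (\<rho> k) z)) \<le> P"
    using continuous_on_compact_bound[OF compact_cball] by blast
  have r: "norm (poly (\<rho> k) z) \<le> P" if "k \<in> {1..Mo}" "z \<in> ball z0 R" for k z
    using member_le_sum[OF that(1), of "\<lambda>k. norm (poly (\<rho> k) z)"] P(2)[of z] that(2)
    by (auto simp: ball_subset_cball[THEN subsetD])
  have rec: "of_nat Mo * S n z = - S 0 z *
       (\<Sum>k\<in>{k\<in>{1..Mo}. Mo - k \<le> n}. poly (\<rho> k) z * wkb_Y (S(n := (\<lambda>_. 0))) k (n - (Mo - k)) z)"
    if "1 \<le> n" "z \<in> ball z0 R" for n z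
    using wkb_S_recursion[OF eq _ that(1) Mo lead] that(2) ball_U by blast
  have S0: "norm (S 0 z) \<le> Q" if "z \<in> ball z0 R" for z
    using Q(2) that by (auto simp: ball_subset_cball[THEN subsetD])
  obtain \<gamma> K where \<gamma>K: "0 < \<gamma>" "1 \<le> K"
    and S: "\<And>n z. 1 \<le> n \<Longrightarrow> z \<in> ball z0 R \<Longrightarrow> norm (S n z) * (R - dist z0 z)^n \<le> \<gamma> * (K^n * fact n)"
    using wkb_S_weighted_le[OF holomorphic_on_subset[OF hol ball_U] rec S0 r Q(1) P(1) Mo] by blast
  have "gevrey_bounded S (ball z0 (R / 2))"
    by (rule gevrey_bounded_half_ball[OF R(1) S0 S]) (use Q(1) \<gamma>K in auto)
  with R ball_U show ?thesis
    using subset_ball[of "R / 2" R z0] by (intro exI[of _ "R / 2"]) auto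
qed

lemma pre_borel_summableI:
  assumes "\<zeta> holomorphic_on U" "\<And>n. f n holomorphic_on U"
    and "\<And>K. compact K \<Longrightarrow> K \<subseteq> U \<Longrightarrow> gevrey_bounded f K"
  shows "pre_borel_summable U \<zeta> f"
  unfolding pre_borel_summable_def
proof (intro conjI allI impI assms(1,2))
  fix K :: "complex set" assume "compact K \<and> K \<subseteq> U"
  then obtain B C where BC: "0 \<le> B" "1 \<le> C" "\<forall>n. \<forall>z\<in>K. norm (f n z) \<le> B * C^n * fact n"
    using assms(3) unfolding gevrey_bounded_def by blast
  have "norm (f n z) < (B + 1) * C^n * fact n" if "z \<in> K" for n z
  proof -
    have "B * C^n * fact n < (B + 1) * C^n * fact n"
      using BC(2) by (simp add: distrib_right)
    then show ?thesis
      using BC(3) that by (meson order.strict_trans1)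
  qed
  then show "\<exists>A C. \<forall>n. \<forall>z\<in>K. norm (f n z) < A * C^n * fact n"
    by blast
qed

lemma root_of_unity_power:
  assumes "1 \<le> N"
  shows "exp (2 * pi * \<i> * of_nat j / of_nat N) ^ N = 1"
proof -
  have "exp (2 * pi * \<i> * of_nat j / of_nat N) ^ N = exp (of_nat N * (2 * pi * \<i> * of_nat j / of_nat N))"
    by (simp flip: exp_of_nat_mult)
  also have "\<dots> = exp (\<i> * (of_nat j * (of_real pi * 2)))"
    using assms by (simp add: field_simps)
  finally show ?thesis by simp
qed

lemma gevrey_bounded_wkb_f:
  assumes "gevrey_bounded G K" "compact K" "continuous_on K (G 1)"
  shows "gevrey_bounded (wkb_f G) K"
proof -
  obtain M where "\<And>z. z \<in> K \<Longrightarrow> norm (exp (G 1 z)) \<le> M"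
    using continuous_on_compact_bound[OF assms(2) continuous_on_exp[OF assms(3)]] by blast
  moreover have "gevrey_bounded (\<lambda>m. G (m + 1)) K"
    using gevrey_bounded_Suc[OF assms(1)] by simp
  ultimately show ?thesis
    unfolding wkb_f_def
    by (intro gevrey_bounded_mult gevrey_bounded_fps_exp_compose)
qed

theorem lemma6:
  fixes \<rho> :: "nat \<Rightarrow> complex poly" and Mo :: nat and \<mu> :: "complex measure"
    and w1 :: "complex \<Rightarrow> complex" and U :: "complex set" and zs :: complex
    and j :: nat and S G :: "nat \<Rightarrow> complex \<Rightarrow> complex"
  assumes ord: "Mo \<ge> 2"
    and es: "nondeg_exactly_solvable \<rho> Mo"
    and mu: "is_root_limit_measure \<rho> Mo \<mu>"
    and w1_hol: "w1 holomorphic_on (- msupp \<mu>)"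
    and w1_root: "\<forall>z\<in>- msupp \<mu>. poly (\<rho> Mo) z * w1 z ^ Mo = 1"
    and w1_inf: "((\<lambda>z. z * w1 z) \<longlongrightarrow> 1) at_infinity"
    and U: "open U" "simply_connected U" "U \<subseteq> - msupp \<mu>"
    and zs: "zs \<in> U"
    and j: "j \<in> {1..Mo}"
    and S0: "\<forall>z\<in>U. S 0 z = exp (2 * pi * \<i> * of_nat (j - 1) / of_nat Mo) * w1 z"
    and S_hol: "\<forall>k. S k holomorphic_on U"
    and S_eq: "wkb_eq \<rho> Mo U S"
    and G_prim: "\<forall>k. \<forall>z\<in>U. (G k has_field_derivative S k z) (at z)"
    and G_base: "\<forall>k. G k zs = 0"
  shows "pre_borel_summable U (G 0) (wkb_f G)"
proof -
  have Mo: "1 \<le> Mo"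
    using ord by simp
  have lead: "poly (\<rho> Mo) z * S 0 z ^ Mo = 1" if "z \<in> U" for z
    using S0 w1_root U(3) that root_of_unity_power[OF Mo, of "j - 1"] by (auto simp: power_mult_distrib)
  have der: "\<And>k z. z \<in> U \<Longrightarrow> (G k has_field_derivative S k z) (at z)"
    using G_prim by blast
  then have G_hol: "G k holomorphic_on U" for k
    using U(1) by (auto simp: holomorphic_on_open)
  have "\<exists>r>0. gevrey_bounded G (ball z r)" if "z \<in> U" for z
  proof (rule gevrey_bounded_primitive_locally[OF U(1) simply_connected_imp_connected[OF U(2)] zs that der])
    show "gevrey_bounded G {zs}"
      using G_base by (intro gevrey_boundedI[of 0 1]) auto
    show "\<exists>r>0. ball z r \<subseteq> U \<and> gevrey_bounded S (ball z r)" if "z \<in> U" for z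
      using S_hol by (intro wkb_S_locally_gevrey_bounded[OF U(1) _ S_eq lead Mo that]) auto
  qed
  then have "gevrey_bounded (wkb_f G) K" if "compact K" "K \<subseteq> U" for K
    using that holomorphic_on_imp_continuous_on[OF holomorphic_on_subset[OF G_hol that(2)]]
    by (intro gevrey_bounded_wkb_f gevrey_bounded_compact) auto
  moreover have "wkb_f G n holomorphic_on U" for n
    unfolding wkb_f_def using U(1) G_hol
    by (intro holomorphic_intros holomorphic_on_fps_exp_compose_nth) auto
  ultimately show ?thesis
    using G_hol by (intro pre_borel_summableI)
qed

end
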